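(* For $k\ge2$, positive integers $a_1,\ldots,a_k$ and $j\ge1$, \[\bigl|Q_j^{a_1,\ldots,a_k}\bigr|=\sum_{\substack{(l_2,\ldots,l_k):\ l_c\in[0,a_c]\\ l_2+\cdots+l_k=j-a_1}}\ \prod_{c=2}^k\binom{a_c}{l_c}\,P\!\Bigl(a_1+\sum_{i=2}^{c-1}l_i,\ a_c-l_c\Bigr),\] where $P(m,l)=\binom{m}{l}\,l!$ (which is $0$ if $l>m$).
   Context: For positive integers $a_1,\ldots,a_k$ with $N=\sum a_m$, let $A_i=a_1+\cdots+a_i$ ($A_0=0$) and $I_i=\{A_{i-1}+1,\ldots,A_i\}$. $Q_j^{a_1,\ldots,a_k}$ is the set of all partitions of $[N]$ into exactly $j$ nonempty blocks such that no block contains two distinct elements of the same segment $I_i$. *)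

theory Defs
  imports Main "HOL-Library.Disjoint_Sets"
begin

definition segA :: "(nat \<Rightarrow> nat) \<Rightarrow> nat \<Rightarrow> nat" where
  "segA a i = (\<Sum>m=1..i. a m)"

definition segI :: "(nat \<Rightarrow> nat) \<Rightarrow> nat \<Rightarrow> nat set" where
  "segI a i = {segA a (i - 1) + 1 .. segA a i}"

definition Qset :: "nat \<Rightarrow> (nat \<Rightarrow> nat) \<Rightarrow> nat \<Rightarrow> nat set set set" where
  "Qset k a j = {p. partition_on {1..segA a k} p \<and> card p = j \<and>
     (\<forall>B\<in>p. \<forall>i\<in>{1..k}. \<forall>x\<in>B. \<forall>y\<in>B. x \<in> segI a i \<and> y \<in> segI a i \<longrightarrow> x = y)}"

definition Pfall :: "nat \<Rightarrow> nat \<Rightarrow> nat" where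
  "Pfall m l = (m choose l) * fact l"

end

theory Submission
  imports Defs "HOL-Library.FuncSet"
begin

text \<open>
  Removing the last segment from a partition in Q_j for the segments a_1, ..., a_(k+1) leaves a
  partition q for a_1, ..., a_k, and the partition is recovered from q by choosing which x of the
  a_(k+1) new points become singleton blocks and placing the other a_(k+1) - x injectively into
  blocks of q. Hence |Q_j^(k+1)| = sum_x C(a_(k+1), x) P(j - x, a_(k+1) - x) |Q_(j-x)^k|, and
  unrolling this recursion from |Q_j^(1)| = [j = a_1] gives the formula: l_c counts the new
  singletons of segment c, and a_1 + l_2 + ... + l_(c-1) is the number of blocks present when
  segment c is added.
\<close>

lemma Pfall_eq_prod: "Pfall m l = (\<Prod>i\<in>{0..<l}. m - i)"
proof (induction l)
  case 0
  then show ?case by (simp add: Pfall_def)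
next
  case (Suc l)
  have "Pfall m (Suc l) = (Suc l * (m choose Suc l)) * fact l"
    by (simp add: Pfall_def fact_Suc algebra_simps)
  also have "Suc l * (m choose Suc l) = (m - l) * (m choose l)"
    using binomial_absorb_comp[of m l] binomial_absorption[of l m] by simp
  finally show ?case
    using Suc by (simp add: Pfall_def)
qed

definition block_of :: "'a set set \<Rightarrow> 'a \<Rightarrow> 'a set" where
  "block_of p x = (THE B. B \<in> p \<and> x \<in> B)"

lemma partition_on_block_eq:
  "partition_on A p \<Longrightarrow> B \<in> p \<Longrightarrow> B' \<in> p \<Longrightarrow> x \<in> B \<Longrightarrow> x \<in> B' \<Longrightarrow> B = B'"
  by (auto simp: partition_on_def disjoint_def)

lemma block_of_eq: "partition_on A p \<Longrightarrow> B \<in> p \<Longrightarrow> x \<in> B \<Longrightarrow> block_of p x = B"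
  unfolding block_of_def by (rule the_equality) (auto simp: partition_on_def disjoint_def)

lemma block_of_mem:
  assumes "partition_on A p" "x \<in> A"
  shows "block_of p x \<in> p" "x \<in> block_of p x"
proof -
  from assms obtain B where "B \<in> p" "x \<in> B" by (auto simp: partition_on_def)
  then show "block_of p x \<in> p" "x \<in> block_of p x"
    using block_of_eq[OF assms(1)] by simp_all
qed

section \<open>Extending a partition by pairwise separated points\<close>

locale separated_extension =
  fixes U S :: "'a set"
  assumes finite_U: "finite U" and finite_S: "finite S" and disjoint_U_S: "U \<inter> S = {}"
begin

definition trace :: "'a set set \<Rightarrow> 'a set set" where
  "trace p = (\<inter>) U ` p - {{}}"

definition extensions :: "'a set set \<Rightarrow> nat \<Rightarrow> 'a set set set" where
  "extensions q j = {p. partition_on (U \<union> S) p \<and> card p = j \<and>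
     (\<forall>B\<in>p. \<forall>x\<in>B \<inter> S. \<forall>y\<in>B \<inter> S. x = y) \<and> trace p = q}"

(* T is the set of new points that become singleton blocks; f attaches every other new point
   to a block of q, injectively, so that no block receives two new points. *)
definition extend :: "'a set set \<Rightarrow> 'a set \<Rightarrow> ('a \<Rightarrow> 'a set) \<Rightarrow> 'a set set" where
  "extend q T f = (\<lambda>C. C \<union> {x \<in> S - T. f x = C}) ` q \<union> (\<lambda>x. {x}) ` T"

definition singleton_points :: "'a set set \<Rightarrow> 'a set" where
  "singleton_points p = {x \<in> S. {x} \<in> p}"

definition attachment :: "'a set set \<Rightarrow> 'a \<Rightarrow> 'a set" where
  "attachment p = restrict (\<lambda>x. U \<inter> block_of p x) (S - singleton_points p)"

lemma trace_extensions: "p \<in> extensions q j \<Longrightarrow> trace p = q"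
  unfolding extensions_def by blast

context
  fixes q T and f :: "'a \<Rightarrow> 'a set"
  assumes q: "partition_on U q" and T: "T \<subseteq> S" and f: "f \<in> (S - T) \<rightarrow>\<^sub>E q" "inj_on f (S - T)"
begin

lemma trace_extend_block: "C \<in> q \<Longrightarrow> U \<inter> (C \<union> {x \<in> S - T. f x = C}) = C"
  using q disjoint_U_S by (auto simp: partition_on_def)

lemma extend_block_ne_singleton:
  assumes "C \<in> q" "x \<in> S"
  shows "C \<union> {y \<in> S - T. f y = C} \<noteq> {x}"
proof
  assume eq: "C \<union> {y \<in> S - T. f y = C} = {x}"
  from assms(1) q have "C \<noteq> {}" "C \<subseteq> U" by (auto simp: partition_on_def)
  then obtain y where "y \<in> C" "y \<in> U" by blast
  moreover from \<open>y \<in> C\<close> have "y = x" using eq by auto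
  ultimately show False using assms(2) disjoint_U_S by blast
qed

lemma extend_cases:
  assumes "B \<in> extend q T f"
  obtains C where "C \<in> q" "B = C \<union> {x \<in> S - T. f x = C}" | x where "x \<in> T" "B = {x}"
  using assms unfolding extend_def by blast

lemma extend_blocks_eq:
  assumes "B \<in> extend q T f" "B' \<in> extend q T f" "x \<in> B" "x \<in> B'"
  shows "B = B'"
proof -
  have qU: "C \<subseteq> U" if "C \<in> q" for C
    using q that by (auto simp: partition_on_def)
  have qeq: "C = C'" if "C \<in> q" "C' \<in> q" "x \<in> C" "x \<in> C'" for C C'
    using partition_on_block_eq[OF q that] .
  show ?thesis
    using assms(1)
  proof (cases rule: extend_cases)
    case (1 C)
    show ?thesis
      using assms(2)
    proof (cases rule: extend_cases)
      case (1 C')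
      with \<open>C \<in> q\<close> \<open>B = _\<close> assms(3,4) qU disjoint_U_S have "C = C'"
        using qeq by blast
      with 1 \<open>B = _\<close> show ?thesis by simp
    next
      case (2 y)
      with \<open>C \<in> q\<close> \<open>B = _\<close> assms(3,4) qU T disjoint_U_S show ?thesis by blast
    qed
  next
    case (2 y)
    show ?thesis
      using assms(2)
    proof (cases rule: extend_cases)
      case (1 C')
      with \<open>y \<in> T\<close> \<open>B = _\<close> assms(3,4) qU T disjoint_U_S show ?thesis by blast
    next
      case (2 y')
      with \<open>B = {y}\<close> assms(3,4) show ?thesis by simp
    qed
  qed
qed

lemma partition_on_extend: "partition_on (U \<union> S) (extend q T f)"
proof (rule partition_onI)
  show "\<Union>(extend q T f) = U \<union> S"
    using q T f(1) by (auto simp: extend_def partition_on_def)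
  show "{} \<notin> extend q T f"
    using q by (auto simp: extend_def partition_on_def)
  show "disjnt B B'" if "B \<in> extend q T f" "B' \<in> extend q T f" "B \<noteq> B'" for B B'
    using extend_blocks_eq that unfolding disjnt_def by blast
qed

lemma trace_extend: "trace (extend q T f) = q"
proof -
  have "(\<inter>) U ` ((\<lambda>x. {x}) ` T) \<subseteq> {{}}"
    using T disjoint_U_S by auto
  moreover have "{} \<notin> q"
    using q by (auto simp: partition_on_def)
  ultimately show ?thesis
    unfolding trace_def extend_def image_Un image_image
    using trace_extend_block by (auto cong: image_cong)
qed

lemma card_extend: "card (extend q T f) = card q + card T"
proof -
  have "inj_on (\<lambda>C. C \<union> {x \<in> S - T. f x = C}) q"
    by (rule inj_onI) (metis trace_extend_block)
  moreover have "(\<lambda>C. C \<union> {x \<in> S - T. f x = C}) ` q \<inter> (\<lambda>x. {x}) ` T = {}"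
    using extend_block_ne_singleton T by blast
  moreover have "finite q" "finite T"
    using finite_elements[OF finite_U q] finite_subset[OF T finite_S] by auto
  ultimately show ?thesis
    unfolding extend_def by (simp add: card_Un_disjoint card_image)
qed

lemma extend_separated: "\<forall>B\<in>extend q T f. \<forall>x\<in>B \<inter> S. \<forall>y\<in>B \<inter> S. x = y"
proof (intro ballI)
  fix B x y assume "B \<in> extend q T f" "x \<in> B \<inter> S" "y \<in> B \<inter> S"
  then show "x = y"
  proof (cases rule: extend_cases)
    case (1 C)
    have "C \<subseteq> U" using \<open>C \<in> q\<close> q by (auto simp: partition_on_def)
    then have "z \<in> S - T \<and> f z = C" if "z \<in> B \<inter> S" for z
      using that \<open>B = _\<close> disjoint_U_S by blast
    then show ?thesis
      using \<open>x \<in> B \<inter> S\<close> \<open>y \<in> B \<inter> S\<close> f(2) by (metis inj_onD)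
  qed simp
qed

lemma extend_mem_extensions: "extend q T f \<in> extensions q (card q + card T)"
  unfolding extensions_def
  using partition_on_extend card_extend extend_separated trace_extend by blast

lemma singleton_mem_extend_iff:
  assumes "x \<in> S"
  shows "{x} \<in> extend q T f \<longleftrightarrow> x \<in> T"
proof
  assume "{x} \<in> extend q T f"
  then show "x \<in> T"
    by (cases rule: extend_cases) (use extend_block_ne_singleton assms in \<open>metis, simp\<close>)
qed (simp add: extend_def)

lemma block_of_extend: "x \<in> S - T \<Longrightarrow> f x = U \<inter> block_of (extend q T f) x"
proof -
  assume x: "x \<in> S - T"
  then have "f x \<in> q" using f(1) by auto
  then have "f x \<union> {y \<in> S - T. f y = f x} \<in> extend q T f"
    by (auto simp: extend_def)
  then have "block_of (extend q T f) x = f x \<union> {y \<in> S - T. f y = f x}"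
    using block_of_eq[OF partition_on_extend] x by blast
  then show ?thesis
    using trace_extend_block[OF \<open>f x \<in> q\<close>] by simp
qed

lemma singleton_points_extend: "singleton_points (extend q T f) = T"
  using singleton_mem_extend_iff T by (auto simp: singleton_points_def)

lemma attachment_extend: "attachment (extend q T f) = f"
proof (rule ext)
  fix x show "attachment (extend q T f) x = f x"
    using block_of_extend f(1) by (auto simp: attachment_def singleton_points_extend PiE_def extensional_def)
qed

end

context
  fixes p
  assumes p: "partition_on (U \<union> S) p" and separated: "\<forall>B\<in>p. \<forall>x\<in>B \<inter> S. \<forall>y\<in>B \<inter> S. x = y"
begin

lemma block_without_U:
  assumes "B \<in> p" "U \<inter> B = {}"
  obtains x where "x \<in> singleton_points p" "B = {x}"
proof -
  from assms p have "B \<subseteq> S" "B \<noteq> {}" by (auto simp: partition_on_def)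
  then obtain x where "x \<in> B" "x \<in> S" by blast
  have "y = x" if "y \<in> B" for y
    using separated assms(1) \<open>x \<in> B\<close> \<open>x \<in> S\<close> that \<open>B \<subseteq> S\<close> by blast
  with \<open>x \<in> B\<close> have "B = {x}" by blast
  with assms(1) \<open>x \<in> S\<close> show thesis using that by (simp add: singleton_points_def)
qed

lemma block_meets_U:
  assumes "x \<in> S - singleton_points p"
  shows "U \<inter> block_of p x \<noteq> {}"
proof
  have B: "block_of p x \<in> p" "x \<in> block_of p x"
    using block_of_mem[OF p] assms by auto
  assume "U \<inter> block_of p x = {}"
  then obtain y where "y \<in> singleton_points p" "block_of p x = {y}"
    by (rule block_without_U[OF B(1)])
  with B(2) assms show False by simp
qed

lemma attachment_funcset: "attachment p \<in> (S - singleton_points p) \<rightarrow>\<^sub>E trace p"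
proof
  fix x assume x: "x \<in> S - singleton_points p"
  then have "block_of p x \<in> p" using block_of_mem[OF p] by blast
  with block_meets_U[OF x] x show "attachment p x \<in> trace p"
    by (simp add: attachment_def trace_def)
qed (auto simp: attachment_def)

lemma inj_on_attachment: "inj_on (attachment p) (S - singleton_points p)"
proof (rule inj_onI)
  fix x y assume x: "x \<in> S - singleton_points p" and y: "y \<in> S - singleton_points p"
    and "attachment p x = attachment p y"
  with x y have eq: "U \<inter> block_of p x = U \<inter> block_of p y"
    by (simp add: attachment_def)
  have Bx: "block_of p x \<in> p" "x \<in> block_of p x" and By: "block_of p y \<in> p" "y \<in> block_of p y"
    using block_of_mem[OF p] x y by auto
  from block_meets_U[OF x] eq obtain z where "z \<in> block_of p x" "z \<in> block_of p y"
    by blast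
  then have "block_of p x = block_of p y"
    using partition_on_block_eq[OF p Bx(1) By(1)] by blast
  then show "x = y"
    using separated Bx By x y by blast
qed

lemma block_with_U:
  assumes B: "B \<in> p" and meets: "U \<inter> B \<noteq> {}"
  shows "B = (U \<inter> B) \<union> {x \<in> S - singleton_points p. attachment p x = U \<inter> B}"
proof -
  have iff: "x \<in> B \<longleftrightarrow> attachment p x = U \<inter> B" if x: "x \<in> S - singleton_points p" for x
  proof
    assume "x \<in> B"
    then show "attachment p x = U \<inter> B"
      using block_of_eq[OF p B] x by (simp add: attachment_def)
  next
    assume "attachment p x = U \<inter> B"
    with x have "U \<inter> block_of p x = U \<inter> B" by (simp add: attachment_def)
    with meets obtain z where "z \<in> block_of p x" "z \<in> B" by blast
    moreover have "block_of p x \<in> p" "x \<in> block_of p x"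
      using block_of_mem[OF p] x by auto
    ultimately show "x \<in> B"
      using partition_on_block_eq[OF p _ B] by blast
  qed
  have "x \<notin> singleton_points p" if "x \<in> B" "x \<in> S" for x
  proof
    assume "x \<in> singleton_points p"
    then have "B = {x}"
      using partition_on_block_eq[OF p B, of "{x}" x] that by (simp add: singleton_points_def)
    with meets \<open>x \<in> S\<close> disjoint_U_S show False by blast
  qed
  moreover have "B \<subseteq> U \<union> S" using B p by (auto simp: partition_on_def)
  ultimately show ?thesis using iff by blast
qed

lemma extend_decomposition: "extend (trace p) (singleton_points p) (attachment p) = p"
proof -
  let ?g = "\<lambda>C. C \<union> {x \<in> S - singleton_points p. attachment p x = C}"
  have g: "?g (U \<inter> B) = B" if "B \<in> p" "U \<inter> B \<noteq> {}" for B
    using block_with_U[OF that] by (rule sym)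
  have "?g ` trace p = {B \<in> p. U \<inter> B \<noteq> {}}"
  proof (intro equalityI subsetI)
    fix B' assume "B' \<in> ?g ` trace p"
    then obtain B where B: "B \<in> p" "U \<inter> B \<noteq> {}" and "B' = ?g (U \<inter> B)"
      unfolding trace_def by blast
    then have "B' = B" using g[OF B] by (simp only:)
    with B show "B' \<in> {B \<in> p. U \<inter> B \<noteq> {}}" by blast
  next
    fix B assume "B \<in> {B \<in> p. U \<inter> B \<noteq> {}}"
    then have B: "B \<in> p" "U \<inter> B \<noteq> {}" by blast+
    then have "U \<inter> B \<in> trace p" unfolding trace_def by blast
    then have "?g (U \<inter> B) \<in> ?g ` trace p" by (rule imageI)
    then show "B \<in> ?g ` trace p" unfolding g[OF B] .
  qed
  moreover have "(\<lambda>x. {x}) ` singleton_points p = {B \<in> p. U \<inter> B = {}}"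
  proof (intro equalityI subsetI)
    fix B assume "B \<in> (\<lambda>x. {x}) ` singleton_points p"
    then obtain x where "x \<in> S" "{x} \<in> p" "B = {x}"
      unfolding singleton_points_def by blast
    with disjoint_U_S show "B \<in> {B \<in> p. U \<inter> B = {}}" by blast
  next
    fix B assume "B \<in> {B \<in> p. U \<inter> B = {}}"
    then have "B \<in> p" "U \<inter> B = {}" by blast+
    then obtain x where "x \<in> singleton_points p" "B = {x}" by (rule block_without_U)
    then show "B \<in> (\<lambda>x. {x}) ` singleton_points p" by blast
  qed
  ultimately have "extend (trace p) (singleton_points p) (attachment p)
      = {B \<in> p. U \<inter> B \<noteq> {}} \<union> {B \<in> p. U \<inter> B = {}}"
    unfolding extend_def by (simp only:)
  then show ?thesis by blast
qed

end

lemma bij_betw_extend: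
  assumes q: "partition_on U q"
  shows "bij_betw (\<lambda>(T, f). extend q T f)
           (SIGMA T:{T. T \<subseteq> S \<and> card T = r}. {f \<in> (S - T) \<rightarrow>\<^sub>E q. inj_on f (S - T)})
           (extensions q (card q + r))"
proof (rule bij_betw_byWitness[where f' = "\<lambda>p. (singleton_points p, attachment p)"], goal_cases)
  case 1
  show ?case
    using singleton_points_extend[OF q] attachment_extend[OF q] by simp
next
  case 2
  show ?case
  proof
    fix p assume "p \<in> extensions q (card q + r)"
    then have part: "partition_on (U \<union> S) p"
      and sep: "\<forall>B\<in>p. \<forall>x\<in>B \<inter> S. \<forall>y\<in>B \<inter> S. x = y" and "trace p = q"
      by (auto simp: extensions_def)
    with extend_decomposition[OF part sep]
    show "(case (singleton_points p, attachment p) of (T, f) \<Rightarrow> extend q T f) = p" by simp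
  qed
next
  case 3
  show ?case
    using extend_mem_extensions[OF q] by auto
next
  case 4
  show ?case
  proof (rule image_subsetI)
    fix p assume "p \<in> extensions q (card q + r)"
    then have part: "partition_on (U \<union> S) p"
      and sep: "\<forall>B\<in>p. \<forall>x\<in>B \<inter> S. \<forall>y\<in>B \<inter> S. x = y"
      and "card p = card q + r" "trace p = q"
      by (auto simp: extensions_def)
    have T: "singleton_points p \<subseteq> S"
      by (auto simp: singleton_points_def)
    have f: "attachment p \<in> (S - singleton_points p) \<rightarrow>\<^sub>E q"
        "inj_on (attachment p) (S - singleton_points p)"
      using attachment_funcset[OF part sep] inj_on_attachment[OF part sep] \<open>trace p = q\<close> by auto
    have "card (extend q (singleton_points p) (attachment p)) = card q + r"
      using extend_decomposition[OF part sep] \<open>trace p = q\<close> \<open>card p = card q + r\<close> by simp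
    then have "card (singleton_points p) = r"
      using card_extend[OF q T f] by simp
    with T f show "(singleton_points p, attachment p)
        \<in> (SIGMA T:{T. T \<subseteq> S \<and> card T = r}. {f \<in> (S - T) \<rightarrow>\<^sub>E q. inj_on f (S - T)})"
      by simp
  qed
qed

lemma card_extensions:
  assumes q: "partition_on U q"
  shows "card (extensions q (card q + r)) = (card S choose r) * Pfall (card q) (card S - r)"
proof -
  have fin_q: "finite q"
    using finite_elements[OF finite_U q] .
  have fin_injections: "finite {f \<in> (S - T) \<rightarrow>\<^sub>E q. inj_on f (S - T)}" for T
  proof -
    have "finite ((S - T) \<rightarrow>\<^sub>E q)"
      using finite_S fin_q by (simp add: finite_PiE)
    then show ?thesis by (rule finite_subset[rotated]) blast
  qed
  have injections: "card {f \<in> (S - T) \<rightarrow>\<^sub>E q. inj_on f (S - T)} = Pfall (card q) (card S - r)"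
    if "T \<in> {T. T \<subseteq> S \<and> card T = r}" for T
  proof -
    from that have "card (S - T) = card S - r"
      using card_Diff_subset finite_subset[OF _ finite_S] by auto
    then show ?thesis
      using card_inj_on_subset_funcset[of "S - T" q "S - T"] finite_S fin_q
      by (simp add: Pfall_eq_prod)
  qed
  have "card (extensions q (card q + r))
      = card (SIGMA T:{T. T \<subseteq> S \<and> card T = r}. {f \<in> (S - T) \<rightarrow>\<^sub>E q. inj_on f (S - T)})"
    using bij_betw_same_card[OF bij_betw_extend[OF q]] by simp
  also have "\<dots> = (\<Sum>T\<in>{T. T \<subseteq> S \<and> card T = r}. card {f \<in> (S - T) \<rightarrow>\<^sub>E q. inj_on f (S - T)})"
    using finite_S fin_injections by (intro card_SigmaI) auto
  also have "\<dots> = (card S choose r) * Pfall (card q) (card S - r)"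
    using injections n_subsets[OF finite_S, of r] by simp
  finally show ?thesis .
qed

end

section \<open>Partitions separating the segments\<close>

lemma segA_Suc: "segA a (Suc k) = segA a k + a (Suc k)"
  by (simp add: segA_def)

lemma segI_Suc: "segI a (Suc k) = {segA a k + 1 .. segA a k + a (Suc k)}"
  by (simp add: segI_def segA_Suc)

lemma segI_subset:
  assumes "i \<in> {1..k}"
  shows "segI a i \<subseteq> {1..segA a k}"
proof -
  have "segA a i \<le> segA a k"
    unfolding segA_def by (rule sum_mono2) (use assms in auto)
  then show ?thesis unfolding segI_def by auto
qed

lemma segA_segI_Suc_Un: "{1..segA a k} \<union> segI a (Suc k) = {1..segA a (Suc k)}"
  unfolding segI_Suc segA_Suc by auto

lemma separated_extension_segments: "separated_extension {1..segA a k} (segI a (Suc k))"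
  by unfold_locales (auto simp: segI_Suc)

definition segments_separated :: "nat \<Rightarrow> (nat \<Rightarrow> nat) \<Rightarrow> nat set \<Rightarrow> bool" where
  "segments_separated k a B \<longleftrightarrow>
     (\<forall>i\<in>{1..k}. \<forall>x\<in>B. \<forall>y\<in>B. x \<in> segI a i \<and> y \<in> segI a i \<longrightarrow> x = y)"

lemma Qset_altdef: "Qset k a j = {p. partition_on {1..segA a k} p \<and> card p = j \<and> (\<forall>B\<in>p. segments_separated k a B)}"
  by (simp only: Qset_def segments_separated_def)

lemma segments_separated_restrict:
  "segments_separated k a B \<longleftrightarrow> segments_separated k a ({1..segA a k} \<inter> B)"
  using segI_subset[of _ k a] unfolding segments_separated_def by blast

lemma segments_separated_Suc:
  "segments_separated (Suc k) a B \<longleftrightarrow>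
     segments_separated k a ({1..segA a k} \<inter> B) \<and>
     (\<forall>x\<in>B \<inter> segI a (Suc k). \<forall>y\<in>B \<inter> segI a (Suc k). x = y)"
proof -
  have "{1..Suc k} = insert (Suc k) {1..k}" by auto
  then have "segments_separated (Suc k) a B \<longleftrightarrow> segments_separated k a B \<and>
     (\<forall>x\<in>B. \<forall>y\<in>B. x \<in> segI a (Suc k) \<and> y \<in> segI a (Suc k) \<longrightarrow> x = y)"
    unfolding segments_separated_def by (simp only: ball_simps conj_commute)
  also have "(\<forall>x\<in>B. \<forall>y\<in>B. x \<in> segI a (Suc k) \<and> y \<in> segI a (Suc k) \<longrightarrow> x = y)
      \<longleftrightarrow> (\<forall>x\<in>B \<inter> segI a (Suc k). \<forall>y\<in>B \<inter> segI a (Suc k). x = y)"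
    by auto
  finally show ?thesis
    using segments_separated_restrict[of k a B] by blast
qed

context
  fixes a :: "nat \<Rightarrow> nat" and k :: nat
begin

interpretation E: separated_extension "{1..segA a k}" "segI a (Suc k)"
  by (rule separated_extension_segments)

lemma trace_mem_Qset:
  assumes "p \<in> Qset (Suc k) a j"
  shows "E.trace p \<in> Qset k a (card (E.trace p))" and "card (E.trace p) \<le> j"
    and "p \<in> E.extensions (E.trace p) j"
proof -
  from assms have part: "partition_on ({1..segA a k} \<union> segI a (Suc k)) p" and "card p = j"
    and sep: "\<forall>B\<in>p. segments_separated (Suc k) a B"
    unfolding Qset_altdef segA_segI_Suc_Un by auto
  have sepU: "segments_separated k a ({1..segA a k} \<inter> B)"
    and sepS: "\<forall>x\<in>B \<inter> segI a (Suc k). \<forall>y\<in>B \<inter> segI a (Suc k). x = y" if "B \<in> p" for B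
    using sep that segments_separated_Suc[of k a B] by blast+
  have "partition_on {1..segA a k} (E.trace p)"
    using partition_on_restrict[OF part, of "{1..segA a k}"] unfolding E.trace_def
    by (simp add: Int_absorb2)
  moreover have "\<forall>C\<in>E.trace p. segments_separated k a C"
    using sepU unfolding E.trace_def by blast
  ultimately show "E.trace p \<in> Qset k a (card (E.trace p))"
    unfolding Qset_altdef by blast
  have "finite p"
    using finite_elements[OF _ part] E.finite_S by simp
  then have "card ((\<inter>) {1..segA a k} ` p) \<le> card p"
    by (rule card_image_le)
  moreover have "card (E.trace p) \<le> card ((\<inter>) {1..segA a k} ` p)"
    unfolding E.trace_def by (rule card_Diff1_le)
  ultimately show "card (E.trace p) \<le> j"
    using \<open>card p = j\<close> by linarith
  have "\<forall>B\<in>p. \<forall>x\<in>B \<inter> segI a (Suc k). \<forall>y\<in>B \<inter> segI a (Suc k). x = y"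
    using sepS by blast
  with part \<open>card p = j\<close> show "p \<in> E.extensions (E.trace p) j"
    unfolding E.extensions_def by blast
qed

lemma extensions_subset_Qset_Suc:
  assumes q: "q \<in> Qset k a m"
  shows "E.extensions q j \<subseteq> Qset (Suc k) a j"
proof
  fix p assume "p \<in> E.extensions q j"
  then obtain part: "partition_on ({1..segA a k} \<union> segI a (Suc k)) p" and "card p = j"
    and sepS: "\<forall>B\<in>p. \<forall>x\<in>B \<inter> segI a (Suc k). \<forall>y\<in>B \<inter> segI a (Suc k). x = y"
    and "E.trace p = q"
    unfolding E.extensions_def by blast
  have "segments_separated k a ({1..segA a k} \<inter> B)" if "B \<in> p" for B
  proof (cases "{1..segA a k} \<inter> B = {}")
    case True
    then show ?thesis by (simp add: segments_separated_def)
  next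
    case False
    with that have "{1..segA a k} \<inter> B \<in> E.trace p"
      unfolding E.trace_def by blast
    with q \<open>E.trace p = q\<close> show ?thesis
      unfolding Qset_altdef by blast
  qed
  with sepS have "\<forall>B\<in>p. segments_separated (Suc k) a B"
    unfolding segments_separated_Suc by blast
  with part \<open>card p = j\<close> show "p \<in> Qset (Suc k) a j"
    unfolding Qset_altdef segA_segI_Suc_Un by blast
qed

lemma Qset_Suc_eq: "Qset (Suc k) a j = (\<Union>x\<le>j. \<Union>q\<in>Qset k a (j - x). E.extensions q j)"
proof (intro equalityI subsetI)
  fix p assume p: "p \<in> Qset (Suc k) a j"
  then have "p \<in> (\<Union>q\<in>Qset k a (j - (j - card (E.trace p))). E.extensions q j)"
    using trace_mem_Qset[OF p] by (intro UN_I[of "E.trace p"]) simp_all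
  then show "p \<in> (\<Union>x\<le>j. \<Union>q\<in>Qset k a (j - x). E.extensions q j)"
    by (intro UN_I[of "j - card (E.trace p)"]) simp_all
next
  fix p assume "p \<in> (\<Union>x\<le>j. \<Union>q\<in>Qset k a (j - x). E.extensions q j)"
  then show "p \<in> Qset (Suc k) a j"
    using extensions_subset_Qset_Suc by blast
qed

lemma finite_Qset: "finite (Qset k a m)"
proof (rule finite_subset)
  show "Qset k a m \<subseteq> {p. partition_on {1..segA a k} p}"
    unfolding Qset_altdef by blast
qed (rule finitely_many_partition_on, simp)

lemma finite_segment_extensions: "finite (E.extensions q j)"
proof (rule finite_subset)
  show "E.extensions q j \<subseteq> {p. partition_on ({1..segA a k} \<union> segI a (Suc k)) p}"
    unfolding E.extensions_def by blast
qed (rule finitely_many_partition_on, use E.finite_S in simp)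

lemma card_segment_extensions:
  assumes "x \<le> j" "q \<in> Qset k a (j - x)"
  shows "card (E.extensions q j) = (a (Suc k) choose x) * Pfall (j - x) (a (Suc k) - x)"
proof -
  from assms have q: "partition_on {1..segA a k} q" and "card q = j - x"
    unfolding Qset_altdef by blast+
  with \<open>x \<le> j\<close> have "j = card q + x" by simp
  then show ?thesis
    using E.card_extensions[OF q, of x] \<open>card q = j - x\<close> by (simp add: segI_Suc)
qed

lemma card_Qset_Suc:
  "card (Qset (Suc k) a j) =
     (\<Sum>x\<le>j. card (Qset k a (j - x)) * ((a (Suc k) choose x) * Pfall (j - x) (a (Suc k) - x)))"
proof -
  have disjoint: "(\<Union>q\<in>Qset k a (j - x). E.extensions q j) \<inter> (\<Union>q\<in>Qset k a (j - x'). E.extensions q j) = {}"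
    if "x \<le> j" "x' \<le> j" "x \<noteq> x'" for x x'
  proof (rule ccontr)
    assume "\<not> ?thesis"
    then obtain p q q' where "q \<in> Qset k a (j - x)" "p \<in> E.extensions q j"
      and "q' \<in> Qset k a (j - x')" "p \<in> E.extensions q' j"
      by blast
    then have "card q = j - x" "card q' = j - x'" "q = q'"
      using E.trace_extensions unfolding Qset_altdef by blast+
    with that show False by simp
  qed
  have "card (Qset (Suc k) a j) = (\<Sum>x\<le>j. card (\<Union>q\<in>Qset k a (j - x). E.extensions q j))"
    unfolding Qset_Suc_eq
    using finite_Qset finite_segment_extensions disjoint by (intro card_UN_disjoint) auto
  also have "\<dots> = (\<Sum>x\<le>j. \<Sum>q\<in>Qset k a (j - x). card (E.extensions q j))"
    using finite_Qset finite_segment_extensions E.trace_extensions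
    by (intro sum.cong refl card_UN_disjoint) blast+
  also have "\<dots> = (\<Sum>x\<le>j. \<Sum>q\<in>Qset k a (j - x). (a (Suc k) choose x) * Pfall (j - x) (a (Suc k) - x))"
    by (intro sum.cong refl card_segment_extensions) simp_all
  also have "\<dots> = (\<Sum>x\<le>j. card (Qset k a (j - x)) * ((a (Suc k) choose x) * Pfall (j - x) (a (Suc k) - x)))"
    by simp
  finally show ?thesis .
qed

end

lemma card_Qset_0: "card (Qset 0 a m) = (if m = 0 then 1 else 0)"
proof -
  have "Qset 0 a m = (if m = 0 then {{}} else {})"
    unfolding Qset_def segA_def by (auto simp: partition_on_empty)
  then show ?thesis by simp
qed

lemma card_Qset_1: "card (Qset 1 a j) = (if j = a 1 then 1 else 0)"
proof -
  have "card (Qset 1 a j) =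
      (\<Sum>x\<le>j. card (Qset 0 a (j - x)) * ((a 1 choose x) * Pfall (j - x) (a 1 - x)))"
    using card_Qset_Suc[of 0 a j] by simp
  also have "\<dots> = (\<Sum>x\<le>j. if x = j then (a 1 choose j) * Pfall 0 (a 1 - j) else 0)"
    by (intro sum.cong refl) (auto simp: card_Qset_0)
  also have "\<dots> = (a 1 choose j) * Pfall 0 (a 1 - j)"
    by simp
  also have "\<dots> = (if j = a 1 then 1 else 0)"
    by (auto simp: Pfall_def)
  finally show ?thesis .
qed

section \<open>The closed formula\<close>

definition compositions :: "(nat \<Rightarrow> nat) \<Rightarrow> nat \<Rightarrow> int \<Rightarrow> (nat \<Rightarrow> nat) set" where
  "compositions a k t =
     {l \<in> PiE {2..k} (\<lambda>c. {0..a c}). (\<Sum>c=2..k. int (l c)) = t - int (a 1)}"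

definition weight :: "(nat \<Rightarrow> nat) \<Rightarrow> nat \<Rightarrow> (nat \<Rightarrow> nat) \<Rightarrow> int" where
  "weight a k l = (\<Prod>c=2..k. int ((a c choose l c) * Pfall (a 1 + (\<Sum>i=2..c-1. l i)) (a c - l c)))"

(* The target t is an integer so that the recursion may ask for a negative number of blocks,
   for which the formula is the empty sum. *)
definition Qformula :: "(nat \<Rightarrow> nat) \<Rightarrow> nat \<Rightarrow> int \<Rightarrow> int" where
  "Qformula a k t = (\<Sum>l\<in>compositions a k t. weight a k l)"

lemma finite_compositions: "finite (compositions a k t)"
proof (rule finite_subset)
  show "compositions a k t \<subseteq> PiE {2..k} (\<lambda>c. {0..a c})"
    unfolding compositions_def by blast
qed (simp add: finite_PiE)

lemma mem_compositions_iff: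
  "l \<in> compositions a k t \<longleftrightarrow> l \<in> PiE {2..k} (\<lambda>c. {0..a c}) \<and> int (a 1 + (\<Sum>c=2..k. l c)) = t"
  unfolding compositions_def by auto

lemma Qformula_1: "Qformula a 1 t = (if t = int (a 1) then 1 else 0)"
  by (auto simp: Qformula_def compositions_def weight_def)

lemma Qformula_neg:
  assumes "t < 0"
  shows "Qformula a k t = 0"
proof -
  have "l \<notin> compositions a k t" for l
  proof
    assume "l \<in> compositions a k t"
    then have "int (a 1 + (\<Sum>c=2..k. l c)) = t"
      unfolding mem_compositions_iff by blast
    with assms show False by linarith
  qed
  then have "compositions a k t = {}" by blast
  then show ?thesis by (simp add: Qformula_def)
qed

lemma sum_fun_upd_outside: "n \<notin> A \<Longrightarrow> (\<Sum>i\<in>A. (g(n := x)) i) = (\<Sum>i\<in>A. g i)"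
  by (rule sum.cong) auto

lemma compositions_Suc:
  assumes "1 \<le> k"
  shows "compositions a (Suc k) t =
    (\<lambda>(x, g). g(Suc k := x)) ` (SIGMA x:{0..a (Suc k)}. compositions a k (t - int x))"
proof -
  have I: "{2..Suc k} = insert (Suc k) {2..k}"
    using assms by auto
  have sum_upd: "(\<Sum>c=2..Suc k. (g(Suc k := x)) c) = x + (\<Sum>c=2..k. g c)"
    for g :: "nat \<Rightarrow> nat" and x
  proof -
    have "(\<Sum>c=2..Suc k. (g(Suc k := x)) c) = (g(Suc k := x)) (Suc k) + (\<Sum>c=2..k. (g(Suc k := x)) c)"
      unfolding I by (rule sum.insert) auto
    also have "(\<Sum>c=2..k. (g(Suc k := x)) c) = (\<Sum>c=2..k. g c)"
      by (rule sum_fun_upd_outside) simp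
    finally show ?thesis by simp
  qed
  show ?thesis
  proof (intro equalityI subsetI)
    fix l assume "l \<in> compositions a (Suc k) t"
    then have l: "l \<in> (\<lambda>(y, g). g(Suc k := y)) ` ({0..a (Suc k)} \<times> PiE {2..k} (\<lambda>c. {0..a c}))"
      and sum_l: "int (a 1 + (\<Sum>c=2..Suc k. l c)) = t"
      unfolding mem_compositions_iff I PiE_insert_eq by simp_all
    from l obtain x g where xg: "(x, g) \<in> {0..a (Suc k)} \<times> PiE {2..k} (\<lambda>c. {0..a c})"
      and l_eq: "l = g(Suc k := x)"
      by auto
    from sum_l have "int (a 1 + (\<Sum>c=2..k. g c)) = t - int x"
      unfolding l_eq sum_upd by simp
    with xg have "g \<in> compositions a k (t - int x)"
      unfolding mem_compositions_iff by blast
    with xg have "(x, g) \<in> (SIGMA x:{0..a (Suc k)}. compositions a k (t - int x))"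
      by simp
    then show "l \<in> (\<lambda>(x, g). g(Suc k := x)) ` (SIGMA x:{0..a (Suc k)}. compositions a k (t - int x))"
      by (rule rev_image_eqI) (simp add: l_eq)
  next
    fix l assume "l \<in> (\<lambda>(x, g). g(Suc k := x)) ` (SIGMA x:{0..a (Suc k)}. compositions a k (t - int x))"
    then obtain x g where "x \<in> {0..a (Suc k)}" "g \<in> compositions a k (t - int x)"
      and l_eq: "l = g(Suc k := x)"
      by auto
    then have "g \<in> PiE {2..k} (\<lambda>c. {0..a c})" and sum_g: "int (a 1 + (\<Sum>c=2..k. g c)) = t - int x"
      unfolding mem_compositions_iff by simp_all
    with \<open>x \<in> {0..a (Suc k)}\<close> have "l \<in> PiE {2..Suc k} (\<lambda>c. {0..a c})"
      unfolding I l_eq by (intro PiE_fun_upd) simp_all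
    moreover from sum_g have "int (a 1 + (\<Sum>c=2..Suc k. l c)) = t"
      unfolding l_eq sum_upd by simp
    ultimately show "l \<in> compositions a (Suc k) t"
      unfolding mem_compositions_iff by simp
  qed
qed

lemma weight_Suc:
  assumes "1 \<le> k"
  shows "weight a (Suc k) (g(Suc k := x)) =
    int ((a (Suc k) choose x) * Pfall (a 1 + (\<Sum>i=2..k. g i)) (a (Suc k) - x)) * weight a k g"
proof -
  let ?l = "g(Suc k := x)"
  let ?w = "\<lambda>l c. int ((a c choose l c) * Pfall (a 1 + (\<Sum>i=2..c-1. l i)) (a c - l c))"
  have inner: "(\<Sum>i=2..c-1. ?l i) = (\<Sum>i=2..c-1. g i)" if "c \<le> Suc k" for c
    using that by (intro sum_fun_upd_outside) auto
  have I: "{2..Suc k} = insert (Suc k) {2..k}"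
    using assms by auto
  have "weight a (Suc k) ?l = ?w ?l (Suc k) * (\<Prod>c=2..k. ?w ?l c)"
    unfolding weight_def I by (rule prod.insert) auto
  also have "(\<Prod>c=2..k. ?w ?l c) = weight a k g"
    unfolding weight_def
  proof (rule prod.cong)
    fix c assume "c \<in> {2..k}"
    then show "?w ?l c = ?w g c"
      using inner[of c] by simp
  qed simp
  also have "?w ?l (Suc k) = int ((a (Suc k) choose x) * Pfall (a 1 + (\<Sum>i=2..k. g i)) (a (Suc k) - x))"
    using inner[of "Suc k"] by simp
  finally show ?thesis .
qed

lemma Qformula_Suc:
  assumes "1 \<le> k"
  shows "Qformula a (Suc k) t =
    (\<Sum>x\<le>a (Suc k). int ((a (Suc k) choose x) * Pfall (nat (t - int x)) (a (Suc k) - x)) *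
      Qformula a k (t - int x))"
proof -
  let ?c = "\<lambda>x. int ((a (Suc k) choose x) * Pfall (nat (t - int x)) (a (Suc k) - x))"
  let ?A = "SIGMA x:{0..a (Suc k)}. compositions a k (t - int x)"
  have "?A \<subseteq> {0..a (Suc k)} \<times> PiE {2..k} (\<lambda>c. {0..a c})"
    by (rule Sigma_mono) (auto simp: compositions_def)
  then have inj: "inj_on (\<lambda>(x, g). g(Suc k := x)) ?A"
    by (rule inj_on_subset[OF inj_combinator[of "Suc k" "{2..k}" "\<lambda>c. {0..a c}"], rotated]) simp
  have weight: "weight a (Suc k) (g(Suc k := x)) = ?c x * weight a k g" if "(x, g) \<in> ?A" for x g
  proof -
    from that have "g \<in> compositions a k (t - int x)" by simp
    then have "int (a 1 + (\<Sum>c=2..k. g c)) = t - int x"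
      unfolding mem_compositions_iff by blast
    then have "a 1 + (\<Sum>c=2..k. g c) = nat (t - int x)" by linarith
    then show ?thesis
      using weight_Suc[OF assms, of a g x] by simp
  qed
  have "Qformula a (Suc k) t = (\<Sum>(x, g)\<in>?A. ?c x * weight a k g)"
    unfolding Qformula_def
    by (rule sum.reindex_cong[OF inj compositions_Suc[OF assms]]) (auto simp: weight)
  also have "\<dots> = (\<Sum>x\<in>{0..a (Suc k)}. \<Sum>g\<in>compositions a k (t - int x). ?c x * weight a k g)"
    by (rule sum.Sigma[symmetric]) (auto simp: finite_compositions)
  also have "\<dots> = (\<Sum>x\<le>a (Suc k). ?c x * Qformula a k (t - int x))"
    by (simp add: Qformula_def sum_distrib_left atLeast0AtMost)
  finally show ?thesis .
qed

lemma Qformula_eq_card_Qset: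
  assumes "1 \<le> k"
  shows "Qformula a k (int j) = int (card (Qset k a j))"
  using assms
proof (induction k arbitrary: j rule: nat_induct_at_least)
  case base
  then show ?case
    using Qformula_1 card_Qset_1 by simp
next
  case (Suc k)
  let ?n = "a (Suc k)"
  define F where "F x = int (card (Qset k a (j - x)) * ((?n choose x) * Pfall (j - x) (?n - x)))" for x
  have summand: "int ((?n choose x) * Pfall (nat (int j - int x)) (?n - x)) * Qformula a k (int j - int x)
      = (if x \<le> j then F x else 0)" for x
  proof (cases "x \<le> j")
    case True
    then have diff: "int j - int x = int (j - x)" by simp
    have "Qformula a k (int j - int x) = int (card (Qset k a (j - x)))"
      unfolding diff by (rule Suc.IH)
    moreover have "nat (int j - int x) = j - x"
      unfolding diff by (rule nat_int)
    ultimately show ?thesis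
      using True by (simp add: F_def)
  next
    case False
    then show ?thesis
      using Qformula_neg[of "int j - int x" a k] by simp
  qed
  have "Qformula a (Suc k) (int j) = (\<Sum>x\<le>?n. if x \<le> j then F x else 0)"
    unfolding Qformula_Suc[OF Suc.hyps] summand ..
  also have "\<dots> = (\<Sum>x\<in>{x\<in>{..?n}. x \<le> j}. F x)"
    by (rule sum.inter_filter[symmetric]) simp
  also have "\<dots> = (\<Sum>x\<le>j. F x)"
  proof (rule sum.mono_neutral_left)
    show "\<forall>x\<in>{..j} - {x\<in>{..?n}. x \<le> j}. F x = 0"
      by (auto simp: F_def)
  qed auto
  also have "\<dots> = int (card (Qset (Suc k) a j))"
    unfolding card_Qset_Suc F_def by simp
  finally show ?case .
qed

theorem mainTheorem3:
  fixes k j :: nat and a :: "nat \<Rightarrow> nat"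
  assumes "k \<ge> 2" and "\<forall>i\<in>{1..k}. a i > 0" and "j \<ge> 1"
  shows "int (card (Qset k a j)) =
    (\<Sum>l\<in>{l\<in>PiE {2..k} (\<lambda>c. {0..a c}). (\<Sum>c=2..k. int (l c)) = int j - int (a 1)}.
       \<Prod>c=2..k. int ((a c choose l c) * Pfall (a 1 + (\<Sum>i=2..c-1. l i)) (a c - l c)))"
  using Qformula_eq_card_Qset[of k a j] assms(1)
  unfolding Qformula_def compositions_def weight_def by simp

end
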